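(* Let $G$ be a finite nonabelian group and let $N$ be a normal subgroup of $G$. Then either $K(G)\le N$, or both $N\le Z(G)$ and $Z(G/N)=Z(G)/N$.
   Context: All groups are finite. For $\chi\in\mathrm{Irr}(G)$, the center of $\chi$ is $Z(\chi)=\{g\in G : |\chi(g)|=\chi(1)\}$; equivalently $Z(\chi)/\ker(\chi)=Z(G/\ker(\chi))$. For a nonabelian group $G$, let $\mathcal{X}=\{\chi\in\mathrm{Irr}(G) : Z(\chi)>Z(G)\}$ (strict containment) and define $K(G)=\bigcap_{\chi\in\mathcal{X}}\ker(\chi)$. If $G$ is abelian, set $K(G)=G$. *)

theory Defs
  imports "HOL-Algebra.Algebra" "Jordan_Normal_Form.Matrix"
begin

definition group_center :: "('a, 'b) monoid_scheme \<Rightarrow> 'a set" where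
  "group_center G = {z \<in> carrier G. \<forall>g \<in> carrier G. z \<otimes>\<^bsub>G\<^esub> g = g \<otimes>\<^bsub>G\<^esub> z}"

definition is_rep :: "('a, 'b) monoid_scheme \<Rightarrow> nat \<Rightarrow> ('a \<Rightarrow> complex mat) \<Rightarrow> bool" where
  "is_rep G n \<rho> \<longleftrightarrow>
     (\<forall>g \<in> carrier G. \<rho> g \<in> carrier_mat n n) \<and>
     \<rho> \<one>\<^bsub>G\<^esub> = 1\<^sub>m n \<and>
     (\<forall>g \<in> carrier G. \<forall>h \<in> carrier G. \<rho> (g \<otimes>\<^bsub>G\<^esub> h) = \<rho> g * \<rho> h)"

definition invariant_subspace :: "('a, 'b) monoid_scheme \<Rightarrow> nat \<Rightarrow> ('a \<Rightarrow> complex mat) \<Rightarrow> complex vec set \<Rightarrow> bool" where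
  "invariant_subspace G n \<rho> W \<longleftrightarrow>
     W \<subseteq> carrier_vec n \<and> 0\<^sub>v n \<in> W \<and>
     (\<forall>v \<in> W. \<forall>w \<in> W. v + w \<in> W) \<and>
     (\<forall>c. \<forall>v \<in> W. c \<cdot>\<^sub>v v \<in> W) \<and>
     (\<forall>g \<in> carrier G. \<forall>v \<in> W. \<rho> g *\<^sub>v v \<in> W)"

definition irreducible_rep :: "('a, 'b) monoid_scheme \<Rightarrow> nat \<Rightarrow> ('a \<Rightarrow> complex mat) \<Rightarrow> bool" where
  "irreducible_rep G n \<rho> \<longleftrightarrow> is_rep G n \<rho> \<and> n > 0 \<and>
     (\<forall>W. invariant_subspace G n \<rho> W \<longrightarrow> W = {0\<^sub>v n} \<or> W = carrier_vec n)"

definition mat_trace :: "complex mat \<Rightarrow> complex" where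
  "mat_trace A = (\<Sum>i<dim_row A. A $$ (i, i))"

definition Irr :: "('a, 'b) monoid_scheme \<Rightarrow> ('a \<Rightarrow> complex) set" where
  "Irr G = {\<chi>. \<exists>n \<rho>. irreducible_rep G n \<rho> \<and> \<chi> = (\<lambda>g. mat_trace (\<rho> g))}"

definition char_ker :: "('a, 'b) monoid_scheme \<Rightarrow> ('a \<Rightarrow> complex) \<Rightarrow> 'a set" where
  "char_ker G \<chi> = {g \<in> carrier G. \<chi> g = \<chi> \<one>\<^bsub>G\<^esub>}"

definition char_center :: "('a, 'b) monoid_scheme \<Rightarrow> ('a \<Rightarrow> complex) \<Rightarrow> 'a set" where
  "char_center G \<chi> = {g \<in> carrier G. cmod (\<chi> g) = cmod (\<chi> \<one>\<^bsub>G\<^esub>)}"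

definition K_set :: "('a, 'b) monoid_scheme \<Rightarrow> 'a set" where
  "K_set G = (if comm_group G then carrier G else
     carrier G \<inter> \<Inter> {char_ker G \<chi> | \<chi>. \<chi> \<in> Irr G \<and> group_center G \<subset> char_center G \<chi>})"

end

(*
  Suppose the second alternative fails. Then some x outside Z(G) has central image in G/N:
  either x lies in N but not in Z(G), or xN is a central element of G/N that is not the image of
  an element of Z(G). If sigma is an irreducible representation of G trivial on N, then sigma(x)
  commutes with every sigma(h), so by Schur's lemma sigma(x) is a scalar of modulus one, and so
  is sigma(z) for every z in Z(G). Hence Z(G) < Z(chi) for the character chi of sigma, and
  K(G) <= ker chi.
  For g outside N, the permutation representation of G on the cosets of N has trace 0 at g,
  which differs from its degree [G:N]. A proper invariant subspace makes a representation block
  upper triangular, and its trace is the sum of the traces of the two diagonal blocks; so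
  descending along invariant subspaces yields an irreducible constituent sigma, trivial on N,
  with chi(g) <> chi(1). Therefore no g outside N lies in K(G).
*)
theory Submission
  imports Defs "Jordan_Normal_Form.VS_Connect" "Jordan_Normal_Form.Char_Poly"
begin

section \<open>Bases adapted to a subspace\<close>

context vec_space
begin

lemma lin_indpt_extend_to_span:
  assumes "S \<subseteq> Y" "Y \<subseteq> carrier_vec n" "lin_indpt S" "finite S"
  shows "\<exists>T. S \<subseteq> T \<and> T \<subseteq> Y \<and> finite T \<and> lin_indpt T \<and> Y \<subseteq> span T"
  using assms
proof (induct "n - card S" arbitrary: S rule: less_induct)
  case (less S)
  show ?case
  proof (cases "Y \<subseteq> span S")
    case True
    then show ?thesis using less(2-5) by blast
  next
    case False
    then obtain v where v: "v \<in> Y" "v \<notin> span S" by blast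
    have S: "S \<subseteq> carrier_vec n" using less(2,3) by blast
    have vc: "v \<in> carrier_vec n" using v less(3) by blast
    have vS: "v \<notin> S" using v in_own_span[OF S] by blast
    have li: "lin_indpt (S \<union> {v})" using lin_dep_iff_in_span[OF S less(4) vc vS] v by blast
    have "card (S \<union> {v}) \<le> n"
      using li_le_dim[OF fin_dim _ li] S vc dim_is_n by simp
    moreover have "card (S \<union> {v}) = Suc (card S)" using vS less(5) by simp
    ultimately have "n - card (S \<union> {v}) < n - card S" by simp
    then obtain T where "S \<union> {v} \<subseteq> T" "T \<subseteq> Y" "finite T" "lin_indpt T" "Y \<subseteq> span T"
      using less(1)[of "S \<union> {v}"] v less(2,3,5) li by auto
    then show ?thesis by blast
  qed
qed

lemma basis_list_adapted_to_subspace: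
  assumes W: "submodule class_ring W V" and W0: "W \<noteq> {0\<^sub>v n}" and W1: "W \<noteq> carrier_vec n"
  obtains b1 b2 where "set b1 \<subseteq> W" "W \<subseteq> span (set b1)"
    "set (b1 @ b2) \<subseteq> carrier_vec n" "carrier_vec n \<subseteq> span (set (b1 @ b2))"
    "length (b1 @ b2) = n" "0 < length b1" "length b1 < n"
proof -
  have Wc: "W \<subseteq> carrier_vec n" and W0in: "0\<^sub>v n \<in> W"
    using W unfolding submodule_def by (auto simp: module_vec_simps)
  obtain B1 where B1: "B1 \<subseteq> W" "finite B1" "lin_indpt B1" "W \<subseteq> span B1"
    using lin_indpt_extend_to_span[of "{}" W] Wc lin_dep_def by auto
  have B1c: "B1 \<subseteq> carrier_vec n" using B1(1) Wc by blast
  obtain T where T: "B1 \<subseteq> T" "T \<subseteq> carrier_vec n" "finite T" "lin_indpt T"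
    "carrier_vec n \<subseteq> span T"
    using lin_indpt_extend_to_span[of B1 "carrier_vec n"] B1 B1c by auto
  obtain b1 where b1: "set b1 = B1" "distinct b1" using finite_distinct_list[OF B1(2)] by blast
  obtain b2 where b2: "set b2 = T - B1" "distinct b2"
    using finite_distinct_list[of "T - B1"] T(3) by blast
  have set_b: "set (b1 @ b2) = T" using b1 b2 T(1) by auto
  have "basis T" unfolding basis_def using T(2,4,5) span_closed[OF T(2)] by blast
  then have "card T = n" using dim_basis[OF T(3)] dim_is_n by simp
  moreover have "distinct (b1 @ b2)" using b1 b2 by auto
  ultimately have len: "length (b1 @ b2) = n" using distinct_card set_b by metis
  have "b1 \<noteq> []"
  proof
    assume "b1 = []"
    then have "W \<subseteq> {0\<^sub>v n}" using B1(4) b1(1) span_empty by simp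
    then show False using W0 W0in by blast
  qed
  moreover have "b2 \<noteq> []"
  proof
    assume "b2 = []"
    then have "carrier_vec n \<subseteq> span B1" using T(1,5) b2(1) by auto
    then show False using span_is_subset[OF B1(1) W] Wc W1 by blast
  qed
  ultimately show ?thesis
    using that[of b1 b2] b1(1) B1(1,4) set_b T(2,5) len by auto
qed

lemma span_as_mat_of_cols_mult:
  assumes "set ws \<subseteq> carrier_vec n" "v \<in> span (set ws)"
  obtains c where "v = mat_of_cols n ws *\<^sub>v vec (length ws) c"
proof -
  have "v \<in> span_list ws" using span_list_as_span[OF assms(1)] assms(2) by simp
  then obtain c where "v = lincomb_list c ws" unfolding span_list_def by blast
  moreover have "\<forall>w\<in>set ws. dim_vec w = n" using assms(1) by auto
  ultimately show ?thesis using that lincomb_list_as_mat_mult[of ws c] by auto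
qed

lemma mat_of_cols_spanning_invertible:
  assumes ws: "set ws \<subseteq> carrier_vec n" "length ws = n" "carrier_vec n \<subseteq> span (set ws)"
  obtains Q where "Q \<in> carrier_mat n n" "mat_of_cols n ws * Q = 1\<^sub>m n" "Q * mat_of_cols n ws = 1\<^sub>m n"
proof -
  define P where "P = mat_of_cols n ws"
  have P: "P \<in> carrier_mat n n" unfolding P_def using ws(2) by auto
  have "\<forall>j. \<exists>c. j < n \<longrightarrow> unit_vec n j = P *\<^sub>v vec n c"
    using span_as_mat_of_cols_mult[OF ws(1)] ws(2,3) unfolding P_def
    by (metis unit_vec_carrier subsetD)
  then obtain cc where cc: "\<And>j. j < n \<Longrightarrow> unit_vec n j = P *\<^sub>v vec n (cc j)" by metis
  define Q where "Q = mat n n (\<lambda>(i, j). cc j i)"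
  have Q: "Q \<in> carrier_mat n n" unfolding Q_def by simp
  have "P * Q = 1\<^sub>m n"
  proof (rule eq_matI)
    fix i j assume "i < dim_row (1\<^sub>m n)" "j < dim_col (1\<^sub>m n)"
    then have i: "i < n" and j: "j < n" by auto
    have "col Q j = vec n (cc j)" unfolding Q_def using j by (intro eq_vecI) auto
    then have "(P * Q) $$ (i, j) = unit_vec n j $ i"
      using i j P Q cc[OF j] by (simp add: index_mult_mat index_mult_mat_vec)
    then show "(P * Q) $$ (i, j) = 1\<^sub>m n $$ (i, j)" using i j by simp
  qed (use P Q in auto)
  then show ?thesis using that[OF Q] mat_mult_left_right_inverse[OF P Q] unfolding P_def by blast
qed

end

section \<open>Block upper triangular representations\<close>

lemma mat_trace_carrier: "A \<in> carrier_mat n n \<Longrightarrow> mat_trace A = (\<Sum>i<n. A $$ (i, i))"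
  unfolding mat_trace_def by simp

lemma mat_trace_one: "mat_trace (1\<^sub>m n) = of_nat n"
  unfolding mat_trace_def by simp

lemma mat_trace_mult_comm:
  assumes A: "A \<in> carrier_mat n m" and B: "B \<in> carrier_mat m n"
  shows "mat_trace (A * B) = mat_trace (B * A)"
proof -
  have "mat_trace (A * B) = (\<Sum>i<n. \<Sum>l<m. A $$ (i, l) * B $$ (l, i))"
    using A B by (simp add: mat_trace_def index_mult_mat scalar_prod_def atLeast0LessThan)
  also have "\<dots> = (\<Sum>l<m. \<Sum>i<n. B $$ (l, i) * A $$ (i, l))"
    by (subst sum.swap) (simp add: mult.commute)
  also have "\<dots> = mat_trace (B * A)"
    using A B by (simp add: mat_trace_def index_mult_mat scalar_prod_def atLeast0LessThan)
  finally show ?thesis .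
qed

lemma mat_trace_similar:
  assumes "A \<in> carrier_mat n n" "P \<in> carrier_mat n n" "Q \<in> carrier_mat n n" "P * Q = 1\<^sub>m n"
  shows "mat_trace (Q * A * P) = mat_trace A"
proof -
  have "mat_trace (Q * A * P) = mat_trace (P * (Q * A))"
    using assms by (intro mat_trace_mult_comm) auto
  also have "P * (Q * A) = A"
    using assms by (simp add: assoc_mult_mat[symmetric, of P n n Q n A n])
  finally show ?thesis .
qed

definition block_upper_triangular :: "nat \<Rightarrow> 'a::zero mat \<Rightarrow> bool" where
  "block_upper_triangular k A \<longleftrightarrow> (\<forall>i j. k \<le> i \<longrightarrow> i < dim_row A \<longrightarrow> j < k \<longrightarrow> A $$ (i, j) = 0)"

definition upper_left_block :: "nat \<Rightarrow> 'a mat \<Rightarrow> 'a mat" where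
  "upper_left_block k A = mat k k (\<lambda>(i, j). A $$ (i, j))"

definition lower_right_block :: "nat \<Rightarrow> 'a mat \<Rightarrow> 'a mat" where
  "lower_right_block k A = mat (dim_row A - k) (dim_col A - k) (\<lambda>(i, j). A $$ (i + k, j + k))"

lemma sum_lessThan_split_at:
  fixes f :: "nat \<Rightarrow> 'a::comm_monoid_add"
  assumes "k \<le> n"
  shows "(\<Sum>i<n. f i) = (\<Sum>i<k. f i) + (\<Sum>i<n - k. f (i + k))"
proof -
  obtain d where "n = k + d" using assms le_Suc_ex by blast
  moreover have "(\<Sum>i<k + d. f i) = (\<Sum>i<k. f i) + (\<Sum>i<d. f (i + k))"
    by (induct d) (simp_all add: ac_simps)
  ultimately show ?thesis by simp
qed

lemma upper_left_block_mult:
  fixes A B :: "'a::semiring_0 mat"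
  assumes A: "A \<in> carrier_mat n n" and B: "B \<in> carrier_mat n n" and "k \<le> n"
    and "block_upper_triangular k B"
  shows "upper_left_block k (A * B) = upper_left_block k A * upper_left_block k B"
proof (rule eq_matI)
  fix i j assume "i < dim_row (upper_left_block k A * upper_left_block k B)"
    "j < dim_col (upper_left_block k A * upper_left_block k B)"
  then have i: "i < k" and j: "j < k" by (auto simp: upper_left_block_def)
  have "(A * B) $$ (i, j) = (\<Sum>l<k. A $$ (i, l) * B $$ (l, j))
      + (\<Sum>l<n - k. A $$ (i, l + k) * B $$ (l + k, j))"
    using A B i j \<open>k \<le> n\<close> sum_lessThan_split_at[OF \<open>k \<le> n\<close>]
    by (simp add: index_mult_mat scalar_prod_def atLeast0LessThan)
  also have "(\<Sum>l<n - k. A $$ (i, l + k) * B $$ (l + k, j)) = 0"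
    using \<open>block_upper_triangular k B\<close> B j unfolding block_upper_triangular_def
    by (intro sum.neutral) auto
  finally show "upper_left_block k (A * B) $$ (i, j)
      = (upper_left_block k A * upper_left_block k B) $$ (i, j)"
    using i j by (simp add: upper_left_block_def index_mult_mat scalar_prod_def atLeast0LessThan)
qed (auto simp: upper_left_block_def)

lemma lower_right_block_mult:
  fixes A B :: "'a::semiring_0 mat"
  assumes A: "A \<in> carrier_mat n n" and B: "B \<in> carrier_mat n n" and "k \<le> n"
    and "block_upper_triangular k A"
  shows "lower_right_block k (A * B) = lower_right_block k A * lower_right_block k B"
proof (rule eq_matI)
  fix i j assume "i < dim_row (lower_right_block k A * lower_right_block k B)"
    "j < dim_col (lower_right_block k A * lower_right_block k B)"
  then have i: "i < n - k" and j: "j < n - k" using A B by (auto simp: lower_right_block_def)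
  have "(A * B) $$ (i + k, j + k) = (\<Sum>l<k. A $$ (i + k, l) * B $$ (l, j + k))
      + (\<Sum>l<n - k. A $$ (i + k, l + k) * B $$ (l + k, j + k))"
    using A B i j \<open>k \<le> n\<close> sum_lessThan_split_at[OF \<open>k \<le> n\<close>]
    by (simp add: index_mult_mat scalar_prod_def atLeast0LessThan)
  also have "(\<Sum>l<k. A $$ (i + k, l) * B $$ (l, j + k)) = 0"
    using \<open>block_upper_triangular k A\<close> A i unfolding block_upper_triangular_def
    by (intro sum.neutral) auto
  finally show "lower_right_block k (A * B) $$ (i, j)
      = (lower_right_block k A * lower_right_block k B) $$ (i, j)"
    using A B i j
    by (simp add: lower_right_block_def index_mult_mat scalar_prod_def atLeast0LessThan)
qed (use A B in \<open>auto simp: lower_right_block_def\<close>)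

lemma lower_right_block_carrier:
  "A \<in> carrier_mat n n \<Longrightarrow> lower_right_block k A \<in> carrier_mat (n - k) (n - k)"
  unfolding lower_right_block_def by simp

lemma upper_left_block_one: "k \<le> n \<Longrightarrow> upper_left_block k (1\<^sub>m n) = 1\<^sub>m k"
  unfolding upper_left_block_def by (intro eq_matI) auto

lemma lower_right_block_one: "lower_right_block k (1\<^sub>m n) = 1\<^sub>m (n - k)"
  unfolding lower_right_block_def by (intro eq_matI) auto

lemma mat_trace_diagonal_blocks:
  assumes "A \<in> carrier_mat n n" "k \<le> n"
  shows "mat_trace A = mat_trace (upper_left_block k A) + mat_trace (lower_right_block k A)"
  using assms sum_lessThan_split_at[OF \<open>k \<le> n\<close>, of "\<lambda>i. A $$ (i, i)"]
  by (simp add: mat_trace_def upper_left_block_def lower_right_block_def)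

lemma mat_of_cols_append_mult_vec:
  shows "mat_of_cols n (b1 @ b2) *\<^sub>v vec (length (b1 @ b2)) (\<lambda>l. if l < length b1 then c l else 0)
       = mat_of_cols n b1 *\<^sub>v vec (length b1) c" (is "?lhs = ?rhs")
proof (rule eq_vecI)
  fix i assume "i < dim_vec (mat_of_cols n b1 *\<^sub>v vec (length b1) c)"
  then have i: "i < n" by simp
  have "(\<Sum>l = 0..<length (b1 @ b2). (b1 @ b2) ! l $ i * (if l < length b1 then c l else 0))
      = (\<Sum>l = 0..<length b1. b1 ! l $ i * c l)"
    by (rule sum.mono_neutral_cong_right) (auto simp: nth_append)
  then show "?lhs $ i = ?rhs $ i"
    using i by (simp add: index_mult_mat_vec scalar_prod_def mat_of_cols_index)
qed simp

lemma (in vec_space) block_upper_triangular_change_of_basis: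
  assumes ws: "set (b1 @ b2) \<subseteq> carrier_vec n" "length (b1 @ b2) = n"
    and Q: "Q \<in> carrier_mat n n" "Q * mat_of_cols n (b1 @ b2) = 1\<^sub>m n"
    and A: "A \<in> carrier_mat n n" and A_b1: "\<And>v. v \<in> set b1 \<Longrightarrow> A *\<^sub>v v \<in> span (set b1)"
  shows "block_upper_triangular (length b1) (Q * A * mat_of_cols n (b1 @ b2))"
  unfolding block_upper_triangular_def
proof (intro allI impI)
  fix i j assume i: "length b1 \<le> i" "i < dim_row (Q * A * mat_of_cols n (b1 @ b2))"
    and j: "j < length b1"
  define P where "P = mat_of_cols n (b1 @ b2)"
  have P: "P \<in> carrier_mat n n" unfolding P_def using ws(2) by auto
  have b1: "set b1 \<subseteq> carrier_vec n" and bj: "b1 ! j \<in> carrier_vec n"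
    using ws(1) j nth_mem[OF j] by auto
  obtain c where c: "A *\<^sub>v (b1 ! j) = mat_of_cols n b1 *\<^sub>v vec (length b1) c"
    using span_as_mat_of_cols_mult[OF b1 A_b1[OF nth_mem[OF j]]] by blast
  define c' where "c' = vec (length (b1 @ b2)) (\<lambda>l. if l < length b1 then c l else 0)"
  have c': "c' \<in> carrier_vec n" unfolding c'_def using ws(2) by simp
  have "A *\<^sub>v (b1 ! j) = P *\<^sub>v c'"
    unfolding c P_def c'_def by (rule mat_of_cols_append_mult_vec[symmetric])
  moreover have "col P j = b1 ! j"
    unfolding P_def using col_mat_of_cols[of j "b1 @ b2"] j bj by (simp add: nth_append)
  ultimately have Ab: "A *\<^sub>v col P j = P *\<^sub>v c'" by simp
  have "(Q * A * P) $$ (i, j) = row (Q * A) i \<bullet> col P j"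
    using i j P Q(1) A ws(2) by (intro index_mult_mat(1)) auto
  also have "\<dots> = ((Q * A) *\<^sub>v col P j) $ i"
    using i Q(1) A by (intro index_mult_mat_vec[symmetric]) auto
  also have "(Q * A) *\<^sub>v col P j = Q *\<^sub>v (P *\<^sub>v c')"
    using assoc_mult_mat_vec[OF Q(1) A] Ab bj \<open>col P j = b1 ! j\<close> by simp
  also have "\<dots> = c'"
    using assoc_mult_mat_vec[OF Q(1) P c', symmetric] Q(2) c' unfolding P_def by simp
  finally show "(Q * A * mat_of_cols n (b1 @ b2)) $$ (i, j) = 0"
    using i ws(2) Q(1) unfolding c'_def P_def by simp
qed

lemma is_repD:
  assumes "is_rep G n \<rho>"
  shows "\<And>g. g \<in> carrier G \<Longrightarrow> \<rho> g \<in> carrier_mat n n" and "\<rho> \<one>\<^bsub>G\<^esub> = 1\<^sub>m n"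
    and "\<And>g h. g \<in> carrier G \<Longrightarrow> h \<in> carrier G \<Longrightarrow> \<rho> (g \<otimes>\<^bsub>G\<^esub> h) = \<rho> g * \<rho> h"
  using assms unfolding is_rep_def by auto

lemma irreducible_rep_is_rep: "irreducible_rep G n \<rho> \<Longrightarrow> is_rep G n \<rho>"
  unfolding irreducible_rep_def by simp

lemma is_rep_similar:
  assumes rep: "is_rep G n \<rho>" and P: "P \<in> carrier_mat n n" and Q: "Q \<in> carrier_mat n n"
    and QP: "Q * P = 1\<^sub>m n" and PQ: "P * Q = 1\<^sub>m n"
  shows "is_rep G n (\<lambda>h. Q * \<rho> h * P)"
  unfolding is_rep_def
proof (intro conjI ballI)
  note \<rho> = is_repD(1)[OF rep] and \<rho>_mult = is_repD(3)[OF rep]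
  show "Q * \<rho> \<one>\<^bsub>G\<^esub> * P = 1\<^sub>m n" using is_repD(2)[OF rep] QP Q by simp
  fix g assume g: "g \<in> carrier G"
  show "Q * \<rho> g * P \<in> carrier_mat n n" using \<rho>[OF g] P Q by simp
  fix h assume h: "h \<in> carrier G"
  have "Q * \<rho> g * P * (Q * \<rho> h * P) = Q * \<rho> g * (P * Q) * \<rho> h * P"
    using P Q \<rho>[OF g] \<rho>[OF h] by (simp add: assoc_mult_mat[of _ n n _ n _ n])
  also have "\<dots> = Q * (\<rho> g * \<rho> h) * P"
    using PQ Q \<rho>[OF g] by (simp add: assoc_mult_mat[OF Q \<rho>[OF g] \<rho>[OF h]])
  finally show "Q * \<rho> (g \<otimes>\<^bsub>G\<^esub> h) * P = Q * \<rho> g * P * (Q * \<rho> h * P)"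
    using \<rho>_mult[OF g h] by simp
qed

lemma is_rep_diagonal_blocks:
  assumes rep: "is_rep G n \<rho>" and "k \<le> n"
    and tri: "\<forall>h\<in>carrier G. block_upper_triangular k (\<rho> h)"
  shows "is_rep G k (\<lambda>h. upper_left_block k (\<rho> h))"
    and "is_rep G (n - k) (\<lambda>h. lower_right_block k (\<rho> h))"
proof -
  note \<rho> = is_repD(1)[OF rep] and \<rho>_one = is_repD(2)[OF rep] and \<rho>_mult = is_repD(3)[OF rep]
  show "is_rep G k (\<lambda>h. upper_left_block k (\<rho> h))"
    unfolding is_rep_def using \<rho> \<rho>_mult tri upper_left_block_mult[OF \<rho> \<rho> \<open>k \<le> n\<close>]
    by (simp add: \<rho>_one upper_left_block_one \<open>k \<le> n\<close>) (simp add: upper_left_block_def)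
  show "is_rep G (n - k) (\<lambda>h. lower_right_block k (\<rho> h))"
    unfolding is_rep_def using \<rho> \<rho>_mult tri lower_right_block_mult[OF \<rho> \<rho> \<open>k \<le> n\<close>]
    by (simp add: \<rho>_one lower_right_block_one lower_right_block_carrier)
qed

lemma invariant_subspace_block_triangular:
  assumes rep: "is_rep G n \<rho>" and inv: "invariant_subspace G n \<rho> W"
    and W0: "W \<noteq> {0\<^sub>v n}" and W1: "W \<noteq> carrier_vec n"
  obtains k P Q where "0 < k" "k < n" "P \<in> carrier_mat n n" "Q \<in> carrier_mat n n"
    "Q * P = 1\<^sub>m n" "P * Q = 1\<^sub>m n" "\<forall>h\<in>carrier G. block_upper_triangular k (Q * \<rho> h * P)"
proof -
  interpret vec_space "TYPE(complex)" n .
  have sub: "submodule class_ring W V"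
    using inv unfolding invariant_subspace_def
    by (intro submodule.intro[OF vec_module]) (auto simp: module_vec_simps)
  obtain b1 b2 where b: "set b1 \<subseteq> W" "W \<subseteq> span (set b1)"
    "set (b1 @ b2) \<subseteq> carrier_vec n" "carrier_vec n \<subseteq> span (set (b1 @ b2))"
    "length (b1 @ b2) = n" "0 < length b1" "length b1 < n"
    using basis_list_adapted_to_subspace[OF sub W0 W1] by blast
  define P where "P = mat_of_cols n (b1 @ b2)"
  have P: "P \<in> carrier_mat n n" unfolding P_def using b(5) by auto
  obtain Q where Q: "Q \<in> carrier_mat n n" "P * Q = 1\<^sub>m n" "Q * P = 1\<^sub>m n"
    using mat_of_cols_spanning_invertible[OF b(3,5,4)] unfolding P_def by blast
  have "block_upper_triangular (length b1) (Q * \<rho> h * P)" if h: "h \<in> carrier G" for h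
    unfolding P_def
  proof (rule block_upper_triangular_change_of_basis[OF b(3,5) Q(1)])
    show "Q * mat_of_cols n (b1 @ b2) = 1\<^sub>m n" using Q(3) unfolding P_def .
    show "\<rho> h \<in> carrier_mat n n" using is_repD(1)[OF rep h] .
    show "\<rho> h *\<^sub>v v \<in> span (set b1)" if "v \<in> set b1" for v
      using inv h that b(1,2) unfolding invariant_subspace_def by blast
  qed
  then show ?thesis using that[OF b(6,7) P Q(1,3,2)] by blast
qed

lemma reducible_rep_split:
  assumes rep: "is_rep G n \<rho>" and "\<not> irreducible_rep G n \<rho>" and "n > 0"
  obtains k A C where "0 < k" "k < n" "is_rep G k A" "is_rep G (n - k) C"
    "\<And>g. g \<in> carrier G \<Longrightarrow> mat_trace (\<rho> g) = mat_trace (A g) + mat_trace (C g)"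
    "\<And>h. \<rho> h = 1\<^sub>m n \<Longrightarrow> A h = 1\<^sub>m k \<and> C h = 1\<^sub>m (n - k)"
proof -
  obtain W where "invariant_subspace G n \<rho> W" "W \<noteq> {0\<^sub>v n}" "W \<noteq> carrier_vec n"
    using assms unfolding irreducible_rep_def by blast
  then obtain k P Q where k: "0 < k" "k < n" and PQ: "P \<in> carrier_mat n n" "Q \<in> carrier_mat n n"
    "Q * P = 1\<^sub>m n" "P * Q = 1\<^sub>m n"
    and tri: "\<forall>h\<in>carrier G. block_upper_triangular k (Q * \<rho> h * P)"
    using invariant_subspace_block_triangular[OF rep] by blast
  define A where "A = (\<lambda>h. upper_left_block k (Q * \<rho> h * P))"
  define C where "C = (\<lambda>h. lower_right_block k (Q * \<rho> h * P))"
  have rep_A: "is_rep G k A" and rep_C: "is_rep G (n - k) C"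
    unfolding A_def C_def using is_rep_diagonal_blocks[OF is_rep_similar[OF rep PQ] _ tri] k by auto
  have tr: "mat_trace (\<rho> g) = mat_trace (A g) + mat_trace (C g)" if g: "g \<in> carrier G" for g
  proof -
    have "mat_trace (\<rho> g) = mat_trace (Q * \<rho> g * P)"
      using mat_trace_similar[OF is_repD(1)[OF rep g] PQ(1,2,4)] by simp
    also have "\<dots> = mat_trace (A g) + mat_trace (C g)"
      unfolding A_def C_def
      by (rule mat_trace_diagonal_blocks) (use PQ is_repD(1)[OF rep g] k in auto)
    finally show ?thesis .
  qed
  have "A h = 1\<^sub>m k \<and> C h = 1\<^sub>m (n - k)" if "\<rho> h = 1\<^sub>m n" for h
    unfolding A_def C_def using that PQ k by (simp add: upper_left_block_one lower_right_block_one)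
  with that[OF k rep_A rep_C tr] show ?thesis by blast
qed

lemma exists_irreducible_rep_trace_ne_degree:
  assumes "is_rep G n \<rho>" "\<forall>h\<in>N. \<rho> h = 1\<^sub>m n" "g \<in> carrier G" "mat_trace (\<rho> g) \<noteq> of_nat n"
  shows "\<exists>d \<sigma>. irreducible_rep G d \<sigma> \<and> (\<forall>h\<in>N. \<sigma> h = 1\<^sub>m d) \<and> mat_trace (\<sigma> g) \<noteq> of_nat d"
  using assms
proof (induct n arbitrary: \<rho> rule: less_induct)
  case (less n \<rho>)
  show ?case
  proof (cases "irreducible_rep G n \<rho>")
    case True
    then show ?thesis using less(3,5) by blast
  next
    case False
    have "n > 0"
    proof (rule ccontr)
      assume "\<not> n > 0"
      then show False using less(5) is_repD(1)[OF less(2,4)] by (simp add: mat_trace_carrier)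
    qed
    obtain k A C where k: "0 < k" "k < n" and rep_A: "is_rep G k A" and rep_C: "is_rep G (n - k) C"
      and tr: "\<And>g. g \<in> carrier G \<Longrightarrow> mat_trace (\<rho> g) = mat_trace (A g) + mat_trace (C g)"
      and triv: "\<And>h. \<rho> h = 1\<^sub>m n \<Longrightarrow> A h = 1\<^sub>m k \<and> C h = 1\<^sub>m (n - k)"
      by (rule reducible_rep_split[OF less(2) False \<open>n > 0\<close>]) (rule that)
    have "\<forall>h\<in>N. A h = 1\<^sub>m k" and "\<forall>h\<in>N. C h = 1\<^sub>m (n - k)" using triv less(3) by auto
    moreover have "mat_trace (A g) \<noteq> of_nat k \<or> mat_trace (C g) \<noteq> of_nat (n - k)"
      using less(5) tr[OF less(4)] k by (auto simp: of_nat_diff)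
    ultimately show ?thesis
      using less(1)[OF \<open>k < n\<close> rep_A _ less(4)] less(1)[of "n - k", OF _ rep_C _ less(4)] k by auto
  qed
qed

section \<open>Schur's lemma and the centre of a character\<close>

lemma complex_mat_has_eigenvalue:
  fixes A :: "complex mat"
  assumes A: "A \<in> carrier_mat n n" and "n > 0"
  obtains e where "eigenvalue A e"
proof -
  obtain es where cp: "char_poly A = (\<Prod>a\<leftarrow>es. [:- a, 1:])" and "length es = n"
    using char_poly_factorized[OF A] by blast
  then obtain e es' where "es = e # es'" using \<open>n > 0\<close> by (cases es) auto
  then have "poly (char_poly A) e = 0" unfolding cp by simp
  then show ?thesis using that eigenvalue_root_char_poly[OF A] by simp
qed

lemma eigenspace_invariant_subspace:
  assumes rep: "is_rep G n \<rho>" and A: "A \<in> carrier_mat n n"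
    and comm: "\<And>h. h \<in> carrier G \<Longrightarrow> A * \<rho> h = \<rho> h * A"
  shows "invariant_subspace G n \<rho> {w \<in> carrier_vec n. A *\<^sub>v w = e \<cdot>\<^sub>v w}"
    (is "invariant_subspace _ _ _ ?W")
  unfolding invariant_subspace_def
proof (intro conjI ballI allI)
  note \<rho> = is_repD(1)[OF rep]
  show "?W \<subseteq> carrier_vec n" by auto
  show "0\<^sub>v n \<in> ?W" using A by (auto intro!: eq_vecI simp: scalar_prod_def)
  show "x + y \<in> ?W" if "x \<in> ?W" "y \<in> ?W" for x y
    using that A by (auto simp: mult_add_distrib_mat_vec smult_add_distrib_vec)
  show "c \<cdot>\<^sub>v x \<in> ?W" if "x \<in> ?W" for c x
    using that A by (auto simp: mult_mat_vec smult_smult_assoc mult.commute)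
  show "\<rho> h *\<^sub>v x \<in> ?W" if h: "h \<in> carrier G" and x: "x \<in> ?W" for h x
  proof -
    have xc: "x \<in> carrier_vec n" and Ax: "A *\<^sub>v x = e \<cdot>\<^sub>v x" using x by auto
    have "A *\<^sub>v (\<rho> h *\<^sub>v x) = (\<rho> h * A) *\<^sub>v x"
      using assoc_mult_mat_vec[OF A \<rho>[OF h] xc] comm[OF h] by simp
    also have "\<dots> = e \<cdot>\<^sub>v (\<rho> h *\<^sub>v x)"
      using assoc_mult_mat_vec[OF \<rho>[OF h] A xc] Ax mult_mat_vec[OF \<rho>[OF h] xc] by simp
    finally show ?thesis using \<rho>[OF h] xc by auto
  qed
qed

lemma irreducible_rep_commuting_scalar:
  assumes irr: "irreducible_rep G n \<rho>" and A: "A \<in> carrier_mat n n"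
    and comm: "\<And>h. h \<in> carrier G \<Longrightarrow> A * \<rho> h = \<rho> h * A"
  obtains c where "A = c \<cdot>\<^sub>m 1\<^sub>m n"
proof -
  have "n > 0"
    and irrW: "\<And>W. invariant_subspace G n \<rho> W \<Longrightarrow> W = {0\<^sub>v n} \<or> W = carrier_vec n"
    using irr unfolding irreducible_rep_def by auto
  obtain e where "eigenvalue A e" using complex_mat_has_eigenvalue[OF A \<open>n > 0\<close>] .
  then obtain v where "eigenvector A v e" unfolding eigenvalue_def by blast
  then have v: "v \<in> carrier_vec n" "v \<noteq> 0\<^sub>v n" "A *\<^sub>v v = e \<cdot>\<^sub>v v"
    using A unfolding eigenvector_def by auto
  define W where "W = {w \<in> carrier_vec n. A *\<^sub>v w = e \<cdot>\<^sub>v w}"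
  have "invariant_subspace G n \<rho> W"
    unfolding W_def
    by (rule eigenspace_invariant_subspace[OF irreducible_rep_is_rep[OF irr] A comm])
  moreover have "v \<in> W" unfolding W_def using v by auto
  ultimately have W: "W = carrier_vec n" using irrW v(2) by auto
  have "A = e \<cdot>\<^sub>m 1\<^sub>m n"
  proof (rule eq_matI)
    fix i j assume "i < dim_row (e \<cdot>\<^sub>m 1\<^sub>m n)" "j < dim_col (e \<cdot>\<^sub>m 1\<^sub>m n)"
    then have i: "i < n" and j: "j < n" by auto
    have "unit_vec n j \<in> W" using W j by simp
    then have "(A *\<^sub>v unit_vec n j) $ i = (e \<cdot>\<^sub>v unit_vec n j) $ i" unfolding W_def by auto
    moreover have "(A *\<^sub>v unit_vec n j) $ i = A $$ (i, j)"
      using A i j by (simp add: index_mult_mat_vec scalar_prod_right_unit)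
    ultimately show "A $$ (i, j) = (e \<cdot>\<^sub>m 1\<^sub>m n) $$ (i, j)" using i j by auto
  qed (use A in auto)
  then show ?thesis using that by blast
qed

lemma (in group) scalar_rep_char_center:
  assumes fin: "finite (carrier G)" and rep: "is_rep G d \<sigma>" and "d > 0"
    and a: "a \<in> carrier G" and c: "\<sigma> a = c \<cdot>\<^sub>m 1\<^sub>m d"
  shows "a \<in> char_center G (\<lambda>g. mat_trace (\<sigma> g))"
proof -
  note \<sigma>_one = is_repD(2)[OF rep] and \<sigma>_mult = is_repD(3)[OF rep]
  have pow: "\<sigma> (a [^] k) = c ^ k \<cdot>\<^sub>m 1\<^sub>m d" for k :: nat
  proof (induct k)
    case 0
    show ?case using \<sigma>_one by (auto intro!: eq_matI)
  next
    case (Suc k)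
    have "\<sigma> (a [^] Suc k) = (c ^ k \<cdot>\<^sub>m 1\<^sub>m d) * (c \<cdot>\<^sub>m 1\<^sub>m d)"
      using \<sigma>_mult a Suc c by simp
    also have "\<dots> = c ^ k \<cdot>\<^sub>m (1\<^sub>m d * (c \<cdot>\<^sub>m 1\<^sub>m d))"
      by (rule mult_smult_assoc_mat) auto
    also have "\<dots> = c ^ Suc k \<cdot>\<^sub>m 1\<^sub>m d" by (rule eq_matI) auto
    finally show ?case .
  qed
  have "c ^ Coset.order G \<cdot>\<^sub>m 1\<^sub>m d = 1\<^sub>m d"
    using pow[of "Coset.order G"] pow_order_eq_1[OF a] \<sigma>_one by simp
  then have "(c ^ Coset.order G \<cdot>\<^sub>m 1\<^sub>m d) $$ (0, 0) = 1\<^sub>m d $$ (0, 0)" by simp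
  then have "cmod c ^ Coset.order G = 1" using \<open>d > 0\<close> by (simp add: norm_power[symmetric])
  moreover have "Coset.order G > 0" using fin order_gt_0_iff_finite by blast
  ultimately have "cmod c = 1" using power_eq_imp_eq_base[of "cmod c" "Coset.order G" 1] by simp
  moreover have "mat_trace (\<sigma> a) = of_nat d * c" unfolding c mat_trace_def by simp
  ultimately show ?thesis
    using a \<sigma>_one mat_trace_one by (simp add: char_center_def norm_mult)
qed

lemma (in group) commuting_image_char_center:
  assumes "finite (carrier G)" and irr: "irreducible_rep G d \<sigma>" and a: "a \<in> carrier G"
    and comm: "\<And>h. h \<in> carrier G \<Longrightarrow> \<sigma> a * \<sigma> h = \<sigma> h * \<sigma> a"
  shows "a \<in> char_center G (\<lambda>g. mat_trace (\<sigma> g))"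
proof -
  have rep: "is_rep G d \<sigma>" and "d > 0" using irr unfolding irreducible_rep_def by auto
  obtain c where "\<sigma> a = c \<cdot>\<^sub>m 1\<^sub>m d"
    using irreducible_rep_commuting_scalar[OF irr is_repD(1)[OF rep a] comm] .
  then show ?thesis using scalar_rep_char_center[OF assms(1) rep \<open>d > 0\<close> a] by blast
qed

lemma (in group) center_subset_char_center:
  assumes "finite (carrier G)" and irr: "irreducible_rep G d \<sigma>"
  shows "group_center G \<subseteq> char_center G (\<lambda>g. mat_trace (\<sigma> g))"
proof
  fix z assume z: "z \<in> group_center G"
  note \<sigma>_mult = is_repD(3)[OF irreducible_rep_is_rep[OF irr]]
  have "\<sigma> z * \<sigma> h = \<sigma> h * \<sigma> z" if "h \<in> carrier G" for h
    using z that \<sigma>_mult[of z h] \<sigma>_mult[of h z] unfolding group_center_def by auto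
  then show "z \<in> char_center G (\<lambda>g. mat_trace (\<sigma> g))"
    using commuting_image_char_center[OF assms] z unfolding group_center_def by blast
qed

section \<open>The permutation representation on cosets\<close>

definition coset_perm_rep :: "('a, 'b) monoid_scheme \<Rightarrow> 'a set list \<Rightarrow> 'a \<Rightarrow> complex mat" where
  "coset_perm_rep G cs h =
     mat (length cs) (length cs) (\<lambda>(i, j). if cs ! j = cs ! i #>\<^bsub>G\<^esub> h then 1 else 0)"

context group
begin

lemma rcosets_mult_closed:
  assumes "subgroup H G" "C \<in> rcosets H" "h \<in> carrier G"
  shows "C #> h \<in> rcosets H"
proof -
  obtain a where a: "a \<in> carrier G" "C = H #> a" using assms(2) unfolding RCOSETS_def by blast
  then have "C #> h = H #> (a \<otimes> h)" using coset_mult_assoc subgroup.subset assms by blast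
  then show ?thesis using rcosetsI[OF subgroup.subset[OF assms(1)]] a(1) assms(3) by simp
qed

lemma normal_rcos_mult_eq_iff:
  assumes N: "N \<lhd> G" and C: "C \<in> rcosets N" and h: "h \<in> carrier G"
  shows "C #> h = C \<longleftrightarrow> h \<in> N"
proof -
  have sg: "subgroup N G" using N by (rule normal_imp_subgroup)
  have Nc: "N \<subseteq> carrier G" using sg by (rule subgroup.subset)
  obtain a where a: "a \<in> carrier G" "C = N #> a" using C unfolding RCOSETS_def by blast
  have C_h: "C #> h = N #> (a \<otimes> h)" using a h coset_mult_assoc[OF Nc] by simp
  show ?thesis
  proof
    assume "C #> h = C"
    then have "N #> (a \<otimes> h) = N #> a" using C_h a(2) by simp
    then have "N #> (a \<otimes> h \<otimes> inv a) = N" by (rule coset_mult_inv2) (use a h Nc in auto)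
    then have "a \<otimes> h \<otimes> inv a \<in> N" by (rule coset_join1) (use a h sg in auto)
    then have "inv a \<otimes> (a \<otimes> h \<otimes> inv a) \<otimes> a \<in> N" by (rule normal.inv_op_closed1[OF N a(1)])
    moreover have "inv a \<otimes> (a \<otimes> h \<otimes> inv a) \<otimes> a = h"
      using a(1) h by (simp add: m_assoc) (simp add: m_assoc[symmetric])
    ultimately show "h \<in> N" by simp
  next
    assume "h \<in> N"
    then have "a \<otimes> h \<otimes> inv a \<otimes> a \<in> N #> a"
      by (intro rcosI normal.inv_op_closed2[OF N a(1)] Nc a(1))
    moreover have "a \<otimes> h \<otimes> inv a \<otimes> a = a \<otimes> h" using a(1) h by (simp add: m_assoc)
    ultimately have "N #> a = N #> (a \<otimes> h)" using repr_independence[OF _ a(1) sg] by simp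
    then show "C #> h = C" using C_h a(2) by simp
  qed
qed

lemma dim_coset_perm_rep [simp]:
  "dim_row (coset_perm_rep G cs h) = length cs" "dim_col (coset_perm_rep G cs h) = length cs"
  unfolding coset_perm_rep_def by simp_all

lemma is_rep_coset_perm_rep:
  assumes H: "subgroup H G" and cs: "set cs = rcosets H" "distinct cs"
  shows "is_rep G (length cs) (coset_perm_rep G cs)"
  unfolding is_rep_def
proof (intro conjI ballI)
  have cs_sub: "cs ! i \<subseteq> carrier G" if "i < length cs" for i
  proof -
    have "cs ! i \<in> rcosets H" using cs(1) nth_mem[OF that] by simp
    then show ?thesis using rcosets_part_G[OF H] by blast
  qed
  have cs_eq: "cs ! i = cs ! j \<longleftrightarrow> i = j" if "i < length cs" "j < length cs" for i j
    using nth_eq_iff_index_eq[OF cs(2)] that by blast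
  show "coset_perm_rep G cs \<one> = 1\<^sub>m (length cs)"
    by (rule eq_matI) (auto simp: coset_perm_rep_def cs_eq coset_mult_one cs_sub)
  fix g assume g: "g \<in> carrier G"
  show "coset_perm_rep G cs g \<in> carrier_mat (length cs) (length cs)"
    by (rule carrier_matI) simp_all
  fix h assume h: "h \<in> carrier G"
  show "coset_perm_rep G cs (g \<otimes> h) = coset_perm_rep G cs g * coset_perm_rep G cs h"
  proof (rule eq_matI)
    fix i j assume "i < dim_row (coset_perm_rep G cs g * coset_perm_rep G cs h)"
      "j < dim_col (coset_perm_rep G cs g * coset_perm_rep G cs h)"
    then have i: "i < length cs" and j: "j < length cs" by auto
    have "cs ! i #> g \<in> set cs" using rcosets_mult_closed[OF H _ g] cs(1) nth_mem[OF i] by simp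
    then obtain l where l: "l < length cs" "cs ! l = cs ! i #> g" by (metis in_set_conv_nth)
    have row_i: "coset_perm_rep G cs g $$ (i, m) = (if m = l then 1 else 0)"
      if "m < length cs" for m
      using i l that cs_eq[OF that l(1)] by (auto simp: coset_perm_rep_def)
    have "(coset_perm_rep G cs g * coset_perm_rep G cs h) $$ (i, j)
        = (\<Sum>m<length cs. coset_perm_rep G cs g $$ (i, m) * coset_perm_rep G cs h $$ (m, j))"
      using i j by (simp add: index_mult_mat scalar_prod_def atLeast0LessThan)
    also have "\<dots> = (\<Sum>m<length cs. if m = l then coset_perm_rep G cs h $$ (l, j) else 0)"
      using row_i by (intro sum.cong) auto
    also have "\<dots> = coset_perm_rep G cs h $$ (l, j)" using l(1) by simp
    also have "\<dots> = coset_perm_rep G cs (g \<otimes> h) $$ (i, j)"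
      using i j l coset_mult_assoc[OF cs_sub[OF i] g h] by (simp add: coset_perm_rep_def)
    finally show "coset_perm_rep G cs (g \<otimes> h) $$ (i, j)
        = (coset_perm_rep G cs g * coset_perm_rep G cs h) $$ (i, j)" by simp
  qed auto
qed

lemma coset_perm_rep_normal:
  assumes N: "N \<lhd> G" and cs: "set cs = rcosets N" "distinct cs" and h: "h \<in> N"
  shows "coset_perm_rep G cs h = 1\<^sub>m (length cs)"
proof -
  have hc: "h \<in> carrier G" using h subgroup.mem_carrier[OF normal_imp_subgroup[OF N]] by simp
  have "cs ! i #> h = cs ! i" if "i < length cs" for i
  proof -
    have "cs ! i \<in> rcosets N" using cs(1) nth_mem[OF that] by simp
    then show ?thesis using normal_rcos_mult_eq_iff[OF N _ hc] h by simp
  qed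
  then show ?thesis
    unfolding coset_perm_rep_def using nth_eq_iff_index_eq[OF cs(2)] by (intro eq_matI) auto
qed

lemma mat_trace_coset_perm_rep_normal:
  assumes N: "N \<lhd> G" and cs: "set cs = rcosets N" and g: "g \<in> carrier G" "g \<notin> N"
  shows "mat_trace (coset_perm_rep G cs g) = 0"
proof -
  have "cs ! i \<noteq> cs ! i #> g" if "i < length cs" for i
  proof -
    have "cs ! i \<in> rcosets N" using cs nth_mem[OF that] by simp
    then have "cs ! i #> g \<noteq> cs ! i" using normal_rcos_mult_eq_iff[OF N _ g(1)] g(2) by simp
    then show ?thesis by (rule not_sym)
  qed
  then show ?thesis unfolding coset_perm_rep_def mat_trace_def by simp
qed

lemma exists_irreducible_rep_separating_normal:
  assumes fin: "finite (carrier G)" and N: "N \<lhd> G" and g: "g \<in> carrier G" "g \<notin> N"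
  shows "\<exists>d \<sigma>. irreducible_rep G d \<sigma> \<and> (\<forall>h\<in>N. \<sigma> h = 1\<^sub>m d) \<and> mat_trace (\<sigma> g) \<noteq> of_nat d"
proof -
  have sg: "subgroup N G" using N by (rule normal_imp_subgroup)
  have "finite (rcosets N)" using fin unfolding RCOSETS_def by simp
  then obtain cs where cs: "set cs = rcosets N" "distinct cs" using finite_distinct_list by blast
  have "N #> \<one> \<in> rcosets N" using rcosetsI[OF subgroup.subset[OF sg]] by simp
  then have "length cs \<noteq> 0" using cs(1) by auto
  then have "mat_trace (coset_perm_rep G cs g) \<noteq> of_nat (length cs)"
    using mat_trace_coset_perm_rep_normal[OF N cs(1) g] by simp
  moreover have "\<forall>h\<in>N. coset_perm_rep G cs h = 1\<^sub>m (length cs)"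
    using coset_perm_rep_normal[OF N cs] by blast
  ultimately show ?thesis
    by (intro exists_irreducible_rep_trace_ne_degree[OF is_rep_coset_perm_rep[OF sg cs] _ g(1)])
qed

end

section \<open>Elements that are central modulo a normal subgroup\<close>

context group
begin

lemma rcos_center_subset_center_FactGroup:
  assumes N: "N \<lhd> G"
  shows "(\<lambda>z. N #> z) ` group_center G \<subseteq> group_center (G Mod N)"
proof
  fix C assume "C \<in> (\<lambda>z. N #> z) ` group_center G"
  then obtain z where z: "z \<in> group_center G" and C: "C = N #> z" by auto
  have zc: "z \<in> carrier G" and z_comm: "\<And>g. g \<in> carrier G \<Longrightarrow> z \<otimes> g = g \<otimes> z"
    using z unfolding group_center_def by auto
  have "C <#> D = D <#> C" if D: "D \<in> rcosets N" for D
  proof -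
    obtain a where a: "a \<in> carrier G" "D = N #> a" using D unfolding RCOSETS_def by blast
    have "C <#> D = N #> (z \<otimes> a)" using C a normal.rcos_sum[OF N zc a(1)] by simp
    also have "\<dots> = N #> (a \<otimes> z)" using z_comm[OF a(1)] by simp
    also have "\<dots> = D <#> C" using C a normal.rcos_sum[OF N a(1) zc] by simp
    finally show ?thesis .
  qed
  moreover have "C \<in> rcosets N"
    using C rcosetsI[OF subgroup.subset[OF normal_imp_subgroup[OF N]] zc] by simp
  ultimately show "C \<in> group_center (G Mod N)" unfolding group_center_def FactGroup_def by simp
qed

lemma exists_noncentral_with_central_rcos:
  assumes N: "N \<lhd> G"
    and "\<not> (N \<subseteq> group_center G \<and> group_center (G Mod N) = (\<lambda>z. N #> z) ` group_center G)"
  obtains x where "x \<in> carrier G" "x \<notin> group_center G"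
    "\<And>h. h \<in> carrier G \<Longrightarrow> N #> (x \<otimes> h) = N #> (h \<otimes> x)"
proof (cases "N \<subseteq> group_center G")
  case False
  then obtain x where x: "x \<in> N" "x \<notin> group_center G" by blast
  have sg: "subgroup N G" using N by (rule normal_imp_subgroup)
  have Nc: "N \<subseteq> carrier G" using sg by (rule subgroup.subset)
  have xc: "x \<in> carrier G" using x(1) Nc by blast
  have "N #> (x \<otimes> h) = N #> (h \<otimes> x)" if h: "h \<in> carrier G" for h
  proof -
    have "N #> x = N" using subgroup.rcos_const[OF sg is_group x(1)] .
    then have "N #> (x \<otimes> h) = N #> h" using coset_mult_assoc[OF Nc xc h] by simp
    moreover have "N #> h #> x = N #> h"
      using normal_rcos_mult_eq_iff[OF N rcosetsI[OF Nc h] xc] x(1) by simp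
    ultimately show ?thesis using coset_mult_assoc[OF Nc h xc] by simp
  qed
  then show ?thesis using that xc x(2) by blast
next
  case True
  then have "(\<lambda>z. N #> z) ` group_center G \<subset> group_center (G Mod N)"
    using assms(2) rcos_center_subset_center_FactGroup[OF N] by auto
  then obtain C where C: "C \<in> group_center (G Mod N)" "C \<notin> (\<lambda>z. N #> z) ` group_center G"
    using psubset_imp_ex_mem by blast
  then have "C \<in> rcosets N" and C_comm: "\<And>D. D \<in> rcosets N \<Longrightarrow> C <#> D = D <#> C"
    unfolding group_center_def FactGroup_def by auto
  then obtain x where x: "x \<in> carrier G" "C = N #> x" unfolding RCOSETS_def by blast
  have Nc: "N \<subseteq> carrier G" using N normal_imp_subgroup subgroup.subset by blast
  have "N #> (x \<otimes> h) = N #> (h \<otimes> x)" if h: "h \<in> carrier G" for h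
  proof -
    have "N #> (x \<otimes> h) = C <#> (N #> h)" using x normal.rcos_sum[OF N x(1) h] by simp
    also have "\<dots> = (N #> h) <#> C" using C_comm rcosetsI[OF Nc h] by simp
    also have "\<dots> = N #> (h \<otimes> x)" using x normal.rcos_sum[OF N h x(1)] by simp
    finally show ?thesis .
  qed
  moreover have "x \<notin> group_center G" using C(2) x(2) by auto
  ultimately show ?thesis using that x(1) by blast
qed

lemma rep_commute_of_rcos_commute:
  assumes rep: "is_rep G d \<sigma>" and triv: "\<forall>n\<in>N. \<sigma> n = 1\<^sub>m d" and sg: "subgroup N G"
    and x: "x \<in> carrier G" and h: "h \<in> carrier G" and xh: "N #> (x \<otimes> h) = N #> (h \<otimes> x)"
  shows "\<sigma> x * \<sigma> h = \<sigma> h * \<sigma> x"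
proof -
  note \<sigma> = is_repD(1)[OF rep] and \<sigma>_mult = is_repD(3)[OF rep]
  have "x \<otimes> h \<in> N #> (h \<otimes> x)" using rcos_self[of "x \<otimes> h" N] xh x h sg by simp
  then obtain n where n: "n \<in> N" "x \<otimes> h = n \<otimes> (h \<otimes> x)" unfolding r_coset_def by blast
  have nc: "n \<in> carrier G" using n(1) subgroup.mem_carrier[OF sg] by simp
  have "\<sigma> x * \<sigma> h = \<sigma> (n \<otimes> (h \<otimes> x))" using \<sigma>_mult[OF x h] n(2) by simp
  also have "\<dots> = \<sigma> n * \<sigma> (h \<otimes> x)" using \<sigma>_mult nc h x by simp
  also have "\<dots> = \<sigma> (h \<otimes> x)" using triv n(1) \<sigma>[OF m_closed[OF h x]] by simp
  also have "\<dots> = \<sigma> h * \<sigma> x" using \<sigma>_mult[OF h x] .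
  finally show ?thesis .
qed

lemma K_set_subset_trace_kernel:
  assumes fin: "finite (carrier G)" and "\<not> comm_group G" and irr: "irreducible_rep G d \<sigma>"
    and x: "x \<in> carrier G" "x \<notin> group_center G"
    and comm: "\<And>h. h \<in> carrier G \<Longrightarrow> \<sigma> x * \<sigma> h = \<sigma> h * \<sigma> x"
  shows "K_set G \<subseteq> {g \<in> carrier G. mat_trace (\<sigma> g) = of_nat d}"
proof -
  define \<chi> where "\<chi> = (\<lambda>g. mat_trace (\<sigma> g))"
  have "group_center G \<subseteq> char_center G \<chi>"
    unfolding \<chi>_def by (rule center_subset_char_center[OF fin irr])
  moreover have "x \<in> char_center G \<chi>"
    unfolding \<chi>_def by (rule commuting_image_char_center[OF fin irr x(1) comm])
  ultimately have "group_center G \<subset> char_center G \<chi>" using x(2) by blast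
  moreover have "\<chi> \<in> Irr G" using irr unfolding Irr_def \<chi>_def by blast
  ultimately have "K_set G \<subseteq> char_ker G \<chi>"
    unfolding K_set_def using \<open>\<not> comm_group G\<close> by (auto intro!: Inter_lower)
  moreover have "\<chi> \<one> = of_nat d"
    using is_repD(2)[OF irreducible_rep_is_rep[OF irr]] mat_trace_one unfolding \<chi>_def by simp
  ultimately show ?thesis unfolding char_ker_def \<chi>_def by auto
qed

end

theorem theoremA:
  fixes G :: "('a, 'b) monoid_scheme" and N :: "'a set"
  assumes "group G" and "finite (carrier G)" and "\<not> comm_group G"
    and "N \<lhd> G"
  shows "K_set G \<subseteq> N \<or>
         (N \<subseteq> group_center G \<and>
          group_center (G Mod N) = (\<lambda>z. N #>\<^bsub>G\<^esub> z) ` group_center G)"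
proof (rule disjCI)
  interpret group G by fact
  assume "\<not> (N \<subseteq> group_center G \<and>
    group_center (G Mod N) = (\<lambda>z. N #>\<^bsub>G\<^esub> z) ` group_center G)"
  then obtain x where x: "x \<in> carrier G" "x \<notin> group_center G"
    and x_central: "\<And>h. h \<in> carrier G \<Longrightarrow> N #>\<^bsub>G\<^esub> (x \<otimes>\<^bsub>G\<^esub> h) = N #>\<^bsub>G\<^esub> (h \<otimes>\<^bsub>G\<^esub> x)"
    using exists_noncentral_with_central_rcos[OF \<open>N \<lhd> G\<close>] by blast
  show "K_set G \<subseteq> N"
  proof
    fix g assume gK: "g \<in> K_set G"
    then have g: "g \<in> carrier G" unfolding K_set_def by (auto split: if_splits)
    show "g \<in> N"
    proof (rule ccontr)
      assume "g \<notin> N"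
      then obtain d \<sigma> where irr: "irreducible_rep G d \<sigma>" and triv: "\<forall>h\<in>N. \<sigma> h = 1\<^sub>m d"
        and g_moved: "mat_trace (\<sigma> g) \<noteq> of_nat d"
        using exists_irreducible_rep_separating_normal[OF assms(2,4) g] by blast
      have "\<sigma> x * \<sigma> h = \<sigma> h * \<sigma> x" if "h \<in> carrier G" for h
        using rep_commute_of_rcos_commute[OF irreducible_rep_is_rep[OF irr] triv
            normal_imp_subgroup[OF assms(4)] x(1) that x_central[OF that]] .
      then have "K_set G \<subseteq> {g \<in> carrier G. mat_trace (\<sigma> g) = of_nat d}"
        using K_set_subset_trace_kernel[OF assms(2,3) irr x] by blast
      then show False using gK g_moved by blast
    qed
  qed
qed

end
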